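(* Let $\mathcal X$ be a finite field, $A$ a full-rank $l\times n$ matrix over $\mathcal X$ (acting as $x\mapsto Ax$), and assume the index sets are ordered ($\mathcal I_1=\{1,\dots,l\}$, $\mathcal I_0=\{l+1,\dots,n\}$). Let $\Psi$ be the stochastic successive-cancellation (SSC) decoder. Then for every decoder $\phi:\mathcal X^l\times\mathcal Y^n\to\mathcal X^n$, $$\Pr\big(\Psi(A\mathbf X,\mathbf Y)\neq\mathbf X\big)\le 2\,\Pr\big(\phi(A\mathbf X,\mathbf Y)\neq\mathbf X\big),$$ where the left-hand probability is also over the internal randomness of $\Psi$. In particular, if $\Pr(\phi(A\mathbf X,\mathbf Y)\neq\mathbf X)=o(1)$, then $\Pr(\Psi(A\mathbf X,\mathbf Y)\neq\mathbf X)\to0$.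
   Context: $\mathcal Y$ is finite; $(\mathbf X,\mathbf Y)$ is a random pair on $\mathcal X^n\times\mathcal Y^n$. $B:\mathcal X^n\to\mathcal X^{n-l}$ is a map such that $T:\mathcal X^n\to\mathcal X^n$, $T(x)\equiv(Ax,Bx)$ (first the $l$ entries of $Ax$, then the $n-l$ entries of $Bx$), is a bijection. Notation: $c_i^j=(c_i,\dots,c_j)$. Extended codeword: $\mathbf C=(C_1,\dots,C_n)=T(\mathbf X)$. SSC decoder: given $(u,y)\in\mathcal X^l\times\mathcal Y^n$, set $\hat c_1^l=u$ and, for $i=l+1,\dots,n$ successively, draw $\hat c_i$ at random (independently of everything else given $\hat c_1^{i-1}$ and $y$) according to the conditional distribution $\mu_{C_i\mid C_1^{i-1}\mathbf Y}(\cdot\mid \hat c_1^{i-1},y)$ (with an arbitrary fixed distribution used when the conditioning event has probability zero). Then $\Psi(u,y)\equiv T^{-1}(\hat c)$. *)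

theory Defs
  imports "HOL-Probability.Probability"
begin

text \<open>Vectors in X^k are lists of length k (0-based indices).
  An l x n matrix over X is a function A :: nat => nat => 'f, used on i < l, j < n.\<close>

definition matvec :: "(nat \<Rightarrow> nat \<Rightarrow> 'f::field) \<Rightarrow> nat \<Rightarrow> nat \<Rightarrow> 'f list \<Rightarrow> 'f list" where
  "matvec A l n x = map (\<lambda>i. \<Sum>j<n. A i j * x ! j) [0..<l]"

definition full_rank :: "(nat \<Rightarrow> nat \<Rightarrow> 'f::field) \<Rightarrow> nat \<Rightarrow> nat \<Rightarrow> bool" where
  "full_rank A l n \<longleftrightarrow>
     (\<forall>c::nat \<Rightarrow> 'f. (\<forall>j<n. (\<Sum>i<l. c i * A i j) = 0) \<longrightarrow> (\<forall>i<l. c i = 0))"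

definition Tmap :: "(nat \<Rightarrow> nat \<Rightarrow> 'f::field) \<Rightarrow> nat \<Rightarrow> nat \<Rightarrow> ('f list \<Rightarrow> 'f list) \<Rightarrow> 'f list \<Rightarrow> 'f list" where
  "Tmap A l n B x = matvec A l n x @ B x"

definition CY_pmf :: "('f list \<Rightarrow> 'f list) \<Rightarrow> ('f list \<times> 'y list) pmf \<Rightarrow> ('f list \<times> 'y list) pmf" where
  "CY_pmf T P = map_pmf (\<lambda>(x, y). (T x, y)) P"

text \<open>Conditional law of C_{i+1} (0-based: C ! i) given C_1^i = pre and Y = y,
  where i = length pre; the fixed default distribution d is used when the
  conditioning event has probability zero.\<close>
definition cond_next ::
  "('f list \<times> 'y list) pmf \<Rightarrow> ('f list \<Rightarrow> 'y list \<Rightarrow> 'f pmf) \<Rightarrow> 'f list \<Rightarrow> 'y list \<Rightarrow> 'f pmf" where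
  "cond_next Q d pre y =
     (let S = {(c, y'). take (length pre) c = pre \<and> y' = y} in
      if set_pmf Q \<inter> S \<noteq> {} then map_pmf (\<lambda>(c, y'). c ! length pre) (cond_pmf Q S)
      else d pre y)"

fun ssc_extend ::
  "('f list \<times> 'y list) pmf \<Rightarrow> ('f list \<Rightarrow> 'y list \<Rightarrow> 'f pmf) \<Rightarrow> 'y list \<Rightarrow> nat \<Rightarrow> 'f list \<Rightarrow> 'f list pmf" where
  "ssc_extend Q d y 0 pre = return_pmf pre"
| "ssc_extend Q d y (Suc k) pre =
     bind_pmf (cond_next Q d pre y) (\<lambda>c. ssc_extend Q d y k (pre @ [c]))"

definition ssc_decoder ::
  "(nat \<Rightarrow> nat \<Rightarrow> 'f::field) \<Rightarrow> nat \<Rightarrow> nat \<Rightarrow> ('f list \<Rightarrow> 'f list) \<Rightarrow> ('f list \<times> 'y list) pmf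
   \<Rightarrow> ('f list \<Rightarrow> 'y list \<Rightarrow> 'f pmf) \<Rightarrow> 'f list \<Rightarrow> 'y list \<Rightarrow> 'f list pmf" where
  "ssc_decoder A l n B P d u y =
     map_pmf (the_inv_into {x. length x = n} (Tmap A l n B))
       (ssc_extend (CY_pmf (Tmap A l n B) P) d y (n - l) u)"

definition ssc_error :: 
  "(nat \<Rightarrow> nat \<Rightarrow> 'f::field) \<Rightarrow> nat \<Rightarrow> nat \<Rightarrow> ('f list \<Rightarrow> 'f list) \<Rightarrow> ('f list \<times> 'y list) pmf
   \<Rightarrow> ('f list \<Rightarrow> 'y list \<Rightarrow> 'f pmf) \<Rightarrow> real" where
  "ssc_error A l n B P d =
     measure_pmf.prob
       (bind_pmf P (\<lambda>(x, y). map_pmf (\<lambda>xh. (x, xh)) (ssc_decoder A l n B P d (matvec A l n x) y)))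
       {(x, xh). xh \<noteq> x}"

end

theory Submission
  imports Defs
begin

text \<open>Given the observation \<open>(AX, Y)\<close>, the SSC decoder draws the codeword symbols one by one
  from their successive conditional laws; by the chain rule this is the same as drawing the
  whole codeword \<open>C\<close> from its posterior law given \<open>(C\<^sub>1\<^sup>l, Y)\<close>. A posterior sample \<open>b\<close> of the
  true value \<open>a\<close> has the same law as \<open>a\<close> and the same observation, so if \<open>b \<noteq> a\<close> then any
  fixed estimator \<open>\<phi>\<close> of the observation misses \<open>a\<close> or misses \<open>b\<close>; both events have
  the probability of error of \<open>\<phi>\<close>, and the union bound gives the factor 2.\<close>

lemma measure_cond_pmf:
  assumes "set_pmf p \<inter> S \<noteq> {}"
  shows "measure_pmf.prob (cond_pmf p S) U = measure_pmf.prob p (S \<inter> U) / measure_pmf.prob p S"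
proof -
  have "measure_pmf (cond_pmf p S) = uniform_measure (measure_pmf p) S"
    using cond_pmf.rep_eq[OF assms] .
  then show ?thesis
    using emeasure_measure_pmf_not_zero[OF assms] by simp
qed

lemma cond_pmf_cond_pmf:
  assumes "set_pmf p \<inter> (S \<inter> U) \<noteq> {}"
  shows "cond_pmf (cond_pmf p S) U = cond_pmf p (S \<inter> U)"
proof (rule pmf_eqI)
  fix x
  have S: "set_pmf p \<inter> S \<noteq> {}" using assms by blast
  have U: "set_pmf (cond_pmf p S) \<inter> U \<noteq> {}" using assms set_cond_pmf[OF S] by blast
  have "measure_pmf.prob p S > 0" "measure_pmf.prob p (S \<inter> U) > 0"
    using S assms by (auto intro: measure_pmf_posI)
  then show "pmf (cond_pmf (cond_pmf p S) U) x = pmf (cond_pmf p (S \<inter> U)) x"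
    unfolding pmf_cond[OF U] pmf_cond[OF assms] pmf_cond[OF S] measure_cond_pmf[OF S] by simp
qed

lemma cond_pmf_cong_set_pmf:
  assumes "set_pmf p \<inter> S = set_pmf p \<inter> S'" "set_pmf p \<inter> S \<noteq> {}"
  shows "cond_pmf p S = cond_pmf p S'"
proof (rule pmf_eqI)
  fix x
  have "measure_pmf.prob p S = measure_pmf.prob p S'"
    by (metis assms(1) Int_commute measure_Int_set_pmf)
  moreover have "pmf p x = 0" if "x \<in> S \<longleftrightarrow> x \<notin> S'"
    using assms(1) that by (metis IntD2 IntI pmf_eq_0_set_pmf)
  ultimately show "pmf (cond_pmf p S) x = pmf (cond_pmf p S') x"
    using assms by (auto simp: pmf_cond)
qed

text \<open>Only the values at \<open>v = \<kappa> a\<close> with \<open>a \<in> set_pmf p\<close> are meaningful; elsewhere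
  \<open>cond_pmf\<close> conditions on a null event and is unspecified.\<close>

definition posterior :: "'a pmf \<Rightarrow> ('a \<Rightarrow> 'o) \<Rightarrow> 'o \<Rightarrow> 'a pmf" where
  "posterior p \<kappa> v = cond_pmf p {a. \<kappa> a = v}"

lemma set_pmf_posterior:
  assumes "a \<in> set_pmf p"
  shows "set_pmf (posterior p \<kappa> (\<kappa> a)) = set_pmf p \<inter> {b. \<kappa> b = \<kappa> a}"
  unfolding posterior_def using assms by (subst set_cond_pmf) auto

lemma bind_map_posterior: "bind_pmf (map_pmf \<kappa> p) (posterior p \<kappa>) = p"
  unfolding posterior_def
  by (rule bind_cond_pmf_cancel) (auto simp: vimage_def eq_commute)

lemma posterior_sampling_error_le:
  fixes p :: "'a pmf" and \<kappa> :: "'a \<Rightarrow> 'o" and f :: "'a \<Rightarrow> 'b" and \<phi> :: "'o \<Rightarrow> 'b"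
  shows "measure_pmf.prob (bind_pmf p (\<lambda>a. map_pmf (Pair a) (posterior p \<kappa> (\<kappa> a))))
           {(a, b). f b \<noteq> f a}
         \<le> 2 * measure_pmf.prob p {a. \<phi> (\<kappa> a) \<noteq> f a}"
proof -
  define J where "J = bind_pmf p (\<lambda>a. map_pmf (Pair a) (posterior p \<kappa> (\<kappa> a)))"
  define F where "F = {a. \<phi> (\<kappa> a) \<noteq> f a}"
  have fst_J: "map_pmf fst J = p"
    by (simp add: J_def map_bind_pmf map_pmf_comp bind_return_pmf')
  have "map_pmf snd J = bind_pmf (map_pmf \<kappa> p) (posterior p \<kappa>)"
    by (simp add: J_def map_bind_pmf map_pmf_comp bind_map_pmf)
  then have snd_J: "map_pmf snd J = p"
    by (simp add: bind_map_posterior)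
  have "{(a, b). f b \<noteq> f a} \<inter> set_pmf J \<subseteq> fst -` F \<union> snd -` F"
    by (auto simp: J_def F_def set_pmf_posterior)
  then have "measure_pmf.prob J {(a, b). f b \<noteq> f a} \<le> measure_pmf.prob J (fst -` F \<union> snd -` F)"
    by (metis measure_Int_set_pmf measure_pmf.finite_measure_mono sets_measure_pmf UNIV_I)
  also have "\<dots> \<le> measure_pmf.prob J (fst -` F) + measure_pmf.prob J (snd -` F)"
    by (rule measure_Un_le) simp_all
  also have "\<dots> = 2 * measure_pmf.prob p F"
    by (simp flip: measure_map_pmf add: fst_J snd_J)
  finally show ?thesis by (simp add: J_def F_def)
qed

lemma ssc_extend_eq_cond_pmf:
  assumes len: "\<forall>(c, y') \<in> set_pmf Q. length c = n"
    and "set_pmf Q \<inter> {(c, y'). take (length pre) c = pre \<and> y' = y} \<noteq> {}"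
    and "length pre + k \<le> n"
  shows "ssc_extend Q d y k pre =
    map_pmf (\<lambda>(c, y'). take (length pre + k) c)
      (cond_pmf Q {(c, y'). take (length pre) c = pre \<and> y' = y})"
  using assms(2,3)
proof (induction k arbitrary: pre)
  case 0
  then have "map_pmf (\<lambda>(c, y'). take (length pre + 0) c)
      (cond_pmf Q {(c, y'). take (length pre) c = pre \<and> y' = y}) =
    map_pmf (\<lambda>_. pre) (cond_pmf Q {(c, y'). take (length pre) c = pre \<and> y' = y})"
    by (intro map_pmf_cong) auto
  then show ?case by simp
next
  case (Suc k)
  define S where "S = {(c, y'). take (length pre) c = pre \<and> y' = y}"
  define R where "R = cond_pmf Q S"
  define g where "g = (\<lambda>b :: 'a list \<times> 'b list. fst b ! length pre)"
  define t where "t = (\<lambda>b :: 'a list \<times> 'b list. take (length pre + Suc k) (fst b))"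
  have S: "set_pmf Q \<inter> S \<noteq> {}" using Suc.prems by (simp add: S_def)
  have take_Suc_iff: "take (Suc (length pre)) c = pre @ [a] \<longleftrightarrow> take (length pre) c = pre \<and> c ! length pre = a"
    if "length c = n" for c :: "'a list" and a
    using that Suc.prems(2) by (auto simp: take_Suc_conv_app_nth)
  have extend_next: "ssc_extend Q d y k (pre @ [a]) = map_pmf t (posterior R g a)"
    if "a \<in> set_pmf (map_pmf g R)" for a
  proof -
    define S' where "S' = {(c, y'). take (length (pre @ [a])) c = pre @ [a] \<and> y' = y}"
    have S_a: "set_pmf Q \<inter> (S \<inter> {b. g b = a}) \<noteq> {}"
      using that S by (auto simp: R_def)
    have fibre: "set_pmf Q \<inter> (S \<inter> {b. g b = a}) = set_pmf Q \<inter> S'"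
      using len take_Suc_iff by (fastforce simp: S_def S'_def g_def)
    have "posterior R g a = cond_pmf Q S'"
      unfolding posterior_def R_def cond_pmf_cond_pmf[OF S_a]
      by (rule cond_pmf_cong_set_pmf[OF fibre S_a])
    moreover have "ssc_extend Q d y k (pre @ [a]) =
        map_pmf (\<lambda>(c, y'). take (length (pre @ [a]) + k) c) (cond_pmf Q S')"
      using Suc.IH[of "pre @ [a]"] Suc.prems(2) S_a fibre by (simp add: S'_def)
    ultimately show ?thesis by (simp add: t_def split_beta')
  qed
  have "cond_next Q d pre y = map_pmf g R"
    using S by (simp add: cond_next_def Let_def S_def R_def g_def split_beta')
  then have "ssc_extend Q d y (Suc k) pre = bind_pmf (map_pmf g R) (\<lambda>a. map_pmf t (posterior R g a))"
    by (auto intro: bind_pmf_cong simp: extend_next)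
  also have "\<dots> = map_pmf t R"
    by (simp flip: map_bind_pmf add: bind_map_posterior)
  finally show ?case by (simp add: t_def S_def R_def split_beta')
qed

lemma ssc_decoder_eq_posterior:
  fixes A :: "nat \<Rightarrow> nat \<Rightarrow> 'f::field"
  assumes bij: "bij_betw (Tmap A l n B) {x. length x = n} {c. length c = n}"
    and len: "\<forall>(x, y) \<in> set_pmf P. length x = n"
    and xy: "(x, y) \<in> set_pmf P"
  shows "ssc_decoder A l n B P d (matvec A l n x) y =
    map_pmf (the_inv_into {x. length x = n} (Tmap A l n B) \<circ> fst)
      (posterior (CY_pmf (Tmap A l n B) P) (\<lambda>(c, y). (take l c, y)) (matvec A l n x, y))"
proof -
  define T where "T = Tmap A l n B"
  define Q where "Q = CY_pmf T P"
  define u where "u = matvec A l n x"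
  have len_T: "length (T z) = n" if "length z = n" for z
    using bij_betw_apply[OF bij] that by (auto simp: T_def)
  have len_u: "length u = l" by (simp add: u_def matvec_def)
  have "l \<le> n"
    using len_T[of "replicate n 0"] by (simp add: T_def Tmap_def matvec_def)
  have len_Q: "\<forall>(c, y') \<in> set_pmf Q. length c = n"
    using len len_T by (auto simp: Q_def CY_pmf_def)
  have event: "{(c, y'). take (length u) c = u \<and> y' = y} = {b. (\<lambda>(c, y). (take l c, y)) b = (u, y)}"
    using len_u by auto
  have "(T x, y) \<in> set_pmf Q" "take l (T x) = u"
    using xy len_u by (auto simp: Q_def CY_pmf_def T_def Tmap_def u_def)
  then have nonempty: "set_pmf Q \<inter> {(c, y'). take (length u) c = u \<and> y' = y} \<noteq> {}"
    using len_u by auto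
  have "ssc_extend Q d y (n - l) u =
      map_pmf (\<lambda>(c, y'). take (length u + (n - l)) c) (posterior Q (\<lambda>(c, y). (take l c, y)) (u, y))"
    unfolding posterior_def event[symmetric]
    by (rule ssc_extend_eq_cond_pmf[OF len_Q nonempty]) (simp add: len_u \<open>l \<le> n\<close>)
  also have "\<dots> = map_pmf fst (posterior Q (\<lambda>(c, y). (take l c, y)) (u, y))"
  proof (rule map_pmf_cong)
    fix b assume "b \<in> set_pmf (posterior Q (\<lambda>(c, y). (take l c, y)) (u, y))"
    then have "b \<in> set_pmf Q"
      unfolding posterior_def event[symmetric] set_cond_pmf[OF nonempty] by blast
    then show "(\<lambda>(c, y'). take (length u + (n - l)) c) b = fst b"
      using len_Q len_u \<open>l \<le> n\<close> by auto
  qed simp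
  finally show ?thesis
    by (simp add: ssc_decoder_def map_pmf_comp comp_def flip: T_def Q_def u_def)
qed

theorem theorem3:
  fixes A :: "nat \<Rightarrow> nat \<Rightarrow> 'f::{field, finite}"
    and l n :: nat
    and B :: "'f list \<Rightarrow> 'f list"
    and P :: "('f list \<times> 'y::finite list) pmf"
    and d :: "'f list \<Rightarrow> 'y list \<Rightarrow> 'f pmf"
    and phi :: "'f list \<Rightarrow> 'y list \<Rightarrow> 'f list"
  assumes "full_rank A l n"
    and "bij_betw (Tmap A l n B) {x. length x = n} {c. length c = n}"
    and "\<forall>(x, y) \<in> set_pmf P. length x = n \<and> length y = n"
  shows "ssc_error A l n B P d
           \<le> 2 * measure_pmf.prob P {(x, y). phi (matvec A l n x) y \<noteq> x}"
proof -
  define T where "T = Tmap A l n B"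
  define Q where "Q = CY_pmf T P"
  define \<kappa> where "\<kappa> = (\<lambda>(c :: 'f list, y :: 'y list). (take l c, y))"
  define f :: "'f list \<times> 'y list \<Rightarrow> 'f list" where "f = the_inv_into {x. length x = n} T \<circ> fst"
  have len: "\<forall>(x, y) \<in> set_pmf P. length x = n" using assms(3) by auto
  have f_T: "f (T x, y) = x" if "(x, y) \<in> set_pmf P" for x y
    using that len assms(2) by (auto simp: f_def T_def bij_betw_def the_inv_into_f_f)
  have \<kappa>_T: "\<kappa> (T x, y) = (matvec A l n x, y)" for x y
    by (simp add: \<kappa>_def T_def Tmap_def matvec_def)
  have "bind_pmf P (\<lambda>(x, y). map_pmf (\<lambda>xh. (x, xh)) (ssc_decoder A l n B P d (matvec A l n x) y)) =
      map_pmf (map_prod f f) (bind_pmf Q (\<lambda>a. map_pmf (Pair a) (posterior Q \<kappa> (\<kappa> a))))"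
    unfolding Q_def CY_pmf_def bind_map_pmf map_bind_pmf
    by (rule bind_pmf_cong)
      (auto simp: ssc_decoder_eq_posterior[OF assms(2) len] CY_pmf_def map_pmf_comp f_T \<kappa>_T
            simp flip: T_def f_def \<kappa>_def)
  then have "ssc_error A l n B P d =
      measure_pmf.prob (bind_pmf Q (\<lambda>a. map_pmf (Pair a) (posterior Q \<kappa> (\<kappa> a)))) {(a, b). f b \<noteq> f a}"
    by (simp add: ssc_error_def vimage_def split_beta')
  also have "\<dots> \<le> 2 * measure_pmf.prob Q {a. case_prod phi (\<kappa> a) \<noteq> f a}"
    by (rule posterior_sampling_error_le)
  also have "measure_pmf.prob Q {a. case_prod phi (\<kappa> a) \<noteq> f a} =
      measure_pmf.prob P {(x, y). phi (matvec A l n x) y \<noteq> x}"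
    unfolding Q_def CY_pmf_def measure_map_pmf
    by (rule measure_prob_cong_0) (auto simp: \<kappa>_T pmf_eq_0_set_pmf dest: f_T)
  finally show ?thesis by simp
qed

end
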